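(* Let $\Omega,\Omega^*$ be compact metric spaces and $c\in C(\Omega\times\Omega^* )$. Let $\mu_1,\mu_2$ be Borel probability measures on $\Omega$ with $\mu_1\neq\mu_2$, $\nu$ a Borel probability measure on $\Omega^*$, and $\phi_i\in\Phi_c(\mu_i,\nu)$ for $i=1,2$. Suppose that at least one of the $\phi_i$ is unique up to an additive constant. Then \[ \max_\Omega(\phi_1-\phi_2)=\max_{\operatorname{supp}(\mu_1-\mu_2)^+}(\phi_1-\phi_2). \]
   Context: For $\phi\in C(\Omega)$, $\phi^c(y)=\sup_{x\in\Omega}\phi(x)-c(x,y)$. $\mathcal T_c(\mu,\nu)=\inf_{\pi\in\Pi(\mu,\nu)}\int c\,d\pi$ over couplings of $\mu,\nu$. $\Phi_c(\mu,\nu)=\{\phi\in C(\Omega):\int_\Omega\phi\,d\mu-\int_{\Omega^*}\phi^c\,d\nu=\mathcal T_c(\mu,\nu)\}$ (the Kantorovich potentials). "Unique up to an additive constant" means $\Phi_c(\mu_i,\nu)=\{\phi_i+C:C\in\mathbb R\}$. $(\mu_1-\mu_2)^+$ is the positive part in the Jordan decomposition of the signed measure $\mu_1-\mu_2$, and $\operatorname{supp}$ is the support (complement of the largest open null set). *)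

theory Defs
  imports "HOL-Probability.Probability"
begin

definition couplings :: "'a measure \<Rightarrow> 'b measure \<Rightarrow> ('a \<times> 'b) measure set" where
  "couplings \<mu> \<nu> = {\<pi>. sets \<pi> = sets (\<mu> \<Otimes>\<^sub>M \<nu>) \<and> distr \<pi> \<mu> fst = \<mu> \<and> distr \<pi> \<nu> snd = \<nu>}"

definition OT_cost :: "('a \<times> 'b \<Rightarrow> real) \<Rightarrow> 'a measure \<Rightarrow> 'b measure \<Rightarrow> real" where
  "OT_cost c \<mu> \<nu> = Inf ((\<lambda>\<pi>. \<integral>z. c z \<partial>\<pi>) ` couplings \<mu> \<nu>)"

definition c_transform :: "'a set \<Rightarrow> ('a \<times> 'b \<Rightarrow> real) \<Rightarrow> ('a \<Rightarrow> real) \<Rightarrow> 'b \<Rightarrow> real" where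
  "c_transform \<Omega> c \<phi> y = Sup ((\<lambda>x. \<phi> x - c (x, y)) ` \<Omega>)"

definition kantorovich_potentials ::
  "'a::topological_space set \<Rightarrow> ('a \<times> 'b \<Rightarrow> real) \<Rightarrow> 'a measure \<Rightarrow> 'b measure \<Rightarrow> ('a \<Rightarrow> real) set" where
  "kantorovich_potentials \<Omega> c \<mu> \<nu> =
     {\<phi>. continuous_on \<Omega> \<phi> \<and>
          (\<integral>x. \<phi> x \<partial>\<mu>) - (\<integral>y. c_transform \<Omega> c \<phi> y \<partial>\<nu>) = OT_cost c \<mu> \<nu>}"

definition unique_up_to_const ::
  "'a::topological_space set \<Rightarrow> ('a \<times> 'b \<Rightarrow> real) \<Rightarrow> 'a measure \<Rightarrow> 'b measure \<Rightarrow> ('a \<Rightarrow> real) \<Rightarrow> bool" where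
  "unique_up_to_const \<Omega> c \<mu> \<nu> \<phi> \<longleftrightarrow>
     (\<forall>\<psi> \<in> kantorovich_potentials \<Omega> c \<mu> \<nu>. \<exists>C::real. \<forall>x\<in>\<Omega>. \<psi> x = \<phi> x + C) \<and>
     (\<forall>C::real. (\<lambda>x. \<phi> x + C) \<in> kantorovich_potentials \<Omega> c \<mu> \<nu>)"

text \<open>Positive part of the Jordan decomposition of the finite signed measure mu1 - mu2:
  (mu1 - mu2)^+(A) = sup over measurable B subset A of (mu1 - mu2)(B).\<close>
definition jordan_pos :: "'a measure \<Rightarrow> 'a measure \<Rightarrow> 'a set \<Rightarrow> real" where
  "jordan_pos \<mu>1 \<mu>2 A = Sup {measure \<mu>1 B - measure \<mu>2 B | B. B \<in> sets \<mu>1 \<and> B \<subseteq> A}"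

definition supp_jordan_pos :: "'a::topological_space set \<Rightarrow> 'a measure \<Rightarrow> 'a measure \<Rightarrow> 'a set" where
  "supp_jordan_pos \<Omega> \<mu>1 \<mu>2 =
     \<Omega> - \<Union>{U. openin (top_of_set \<Omega>) U \<and> jordan_pos \<mu>1 \<mu>2 U = 0}"

end

theory Submission
  imports Defs
begin

(* Let a be the maximum of phi1 - phi2 on S = supp (mu1 - mu2)^+ and g = phi2 + a.  Then
   min phi1 g and max phi1 g are again Kantorovich potentials for mu1 resp. mu2: the c-transform
   is submodular, (min phi1 g)^c + (max phi1 g)^c <= phi1^c + g^c, and h = (phi1 - g)^+ is
   nonnegative and vanishes on S, so its mu1-integral is at most its mu2-integral.  As
   min phi1 g = phi1 - h and max phi1 g = g + h, the two dual values add up to at least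
   T_c(mu1, nu) + T_c(mu2, nu), and weak duality forces equality.  If phi1 is unique up to
   constants, min phi1 g = phi1 + C with C = 0 at a point of S (S is nonempty as mu1 <> mu2),
   so phi1 <= g on Omega; if phi2 is, the same argument applies to max phi1 g = g + C. *)

section \<open>Measures on compact metric spaces\<close>

lemma space_eq_restrict_borel:
  assumes "sets M = sets (restrict_space borel K)"
  shows "space M = K"
  using sets_eq_imp_space_eq[OF assms] by (simp add: space_restrict_space)

lemma borel_measurable_continuous_on_restrict_borel:
  assumes "sets M = sets (restrict_space borel K)" "continuous_on K f"
  shows "f \<in> borel_measurable M"
  using borel_measurable_continuous_on_restrict[OF assms(2)] measurable_cong_sets[OF assms(1) refl]
  by blast

lemma integrable_continuous_on_compact_space:
  fixes f :: "'a::metric_space \<Rightarrow> real"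
  assumes "finite_measure M" "compact (space M)" "continuous_on (space M) f"
    and "f \<in> borel_measurable M"
  shows "integrable M f"
proof -
  interpret finite_measure M by fact
  obtain B where "\<forall>x\<in>space M. norm (f x) \<le> B"
    using compact_imp_bounded[OF compact_continuous_image[OF assms(3,2)]]
    by (auto simp: bounded_iff)
  then show ?thesis
    using assms(4) by (intro integrable_const_bound[where B = B]) auto
qed

lemma integrable_continuous_on_restrict_borel:
  fixes f :: "'a::metric_space \<Rightarrow> real"
  assumes "finite_measure M" "sets M = sets (restrict_space borel K)" "compact K"
    and "continuous_on K f"
  shows "integrable M f"
  using assms space_eq_restrict_borel[OF assms(2)]
    borel_measurable_continuous_on_restrict_borel[OF assms(2,4)]
  by (intro integrable_continuous_on_compact_space) auto

lemma (in prob_space) integral_add_const: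
  fixes f :: "'a \<Rightarrow> real"
  assumes "integrable M f"
  shows "(\<integral>x. f x + a \<partial>M) = (\<integral>x. f x \<partial>M) + a"
  using assms by (simp add: prob_space)

lemma distr_pair_snd:
  assumes "prob_space M" "prob_space N"
  shows "distr (M \<Otimes>\<^sub>M N) N snd = N"
proof -
  interpret pair_prob_space M N
    using assms by (simp add: pair_prob_space_def pair_sigma_finite_def prob_space_imp_sigma_finite)
  show ?thesis
  proof (intro measure_eqI)
    fix A assume A: "A \<in> sets (distr (M \<Otimes>\<^sub>M N) N snd)"
    then have "emeasure (distr (M \<Otimes>\<^sub>M N) N snd) A = emeasure (M \<Otimes>\<^sub>M N) (space M \<times> A)"
      by (auto simp: emeasure_distr space_pair_measure dest: sets.sets_into_space
          intro!: arg_cong2[where f = emeasure])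
    also have "\<dots> = emeasure N A"
      using A M2.emeasure_pair_measure_Times[OF sets.top[of M], of A]
      by (simp add: M1.emeasure_space_1)
    finally show "emeasure (distr (M \<Otimes>\<^sub>M N) N snd) A = emeasure N A" .
  qed simp
qed

lemma compact_countable_dense:
  fixes K :: "'a::metric_space set"
  assumes "compact K"
  obtains D where "countable D" "\<And>x e. x \<in> K \<Longrightarrow> 0 < e \<Longrightarrow> \<exists>d\<in>D. dist d x < e"
proof -
  have "\<exists>X. finite X \<and> K \<subseteq> (\<Union>d\<in>X. ball d (1 / Suc n))" for n
  proof -
    have "K \<subseteq> (\<Union>d\<in>K. ball d (1 / Suc n))" by auto
    then show ?thesis
      using compactE_image[OF assms, of K "\<lambda>d. ball d (1 / Suc n)"] by (metis open_ball)
  qed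
  then obtain X where X: "\<And>n. finite (X n)" "\<And>n. K \<subseteq> (\<Union>d\<in>X n. ball d (1 / Suc n))"
    by metis
  show ?thesis
  proof
    show "countable (\<Union>n. X n)" using X(1) by (simp add: countable_finite)
    fix x e assume "x \<in> K" "0 < (e::real)"
    obtain n where "1 / real (Suc n) < e" using nat_approx_posE[OF \<open>0 < e\<close>] .
    moreover obtain d where "d \<in> X n" "dist d x < 1 / Suc n" using X(2)[of n] \<open>x \<in> K\<close> by auto
    ultimately show "\<exists>d\<in>\<Union>n. X n. dist d x < e" by (metis UN_iff UNIV_I less_trans)
  qed
qed

(* The product of two Borel algebras may miss open sets of the product space; compactness gives
   countable dense sets, so that every relatively open set is a countable union of rectangles. *)
lemma openin_sets_pair_restrict_borel:
  fixes A :: "'a::metric_space set" and B :: "'b::metric_space set"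
  assumes "compact A" "compact B" "openin (top_of_set (A \<times> B)) W"
  shows "W \<in> sets (restrict_space borel A \<Otimes>\<^sub>M restrict_space borel B)"
proof -
  obtain D where D: "countable D" "\<And>x e. x \<in> A \<Longrightarrow> 0 < e \<Longrightarrow> \<exists>d\<in>D. dist d x < e"
    using compact_countable_dense[OF assms(1)] by blast
  obtain D' where D': "countable D'" "\<And>y e. y \<in> B \<Longrightarrow> 0 < e \<Longrightarrow> \<exists>d\<in>D'. dist d y < e"
    using compact_countable_dense[OF assms(2)] by blast
  define R where "R = (\<lambda>(d, d', n::nat). (A \<inter> ball d (1 / Suc n)) \<times> (B \<inter> ball d' (1 / Suc n)))"
  define I where "I = {i \<in> D \<times> D' \<times> UNIV. R i \<subseteq> W}"
  have "W \<subseteq> \<Union>(R ` I)"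
  proof
    fix z assume "z \<in> W"
    then obtain x y where z: "z = (x, y)" "x \<in> A" "y \<in> B"
      using openin_imp_subset[OF assms(3)] by auto
    obtain r where "r > 0" and r: "\<And>z'. z' \<in> A \<times> B \<Longrightarrow> dist z' z < r \<Longrightarrow> z' \<in> W"
      using assms(3) \<open>z \<in> W\<close> unfolding openin_euclidean_subtopology_iff by metis
    obtain n where n: "1 / real (Suc n) < r / 4"
      using nat_approx_posE \<open>r > 0\<close> by (metis divide_pos_pos zero_less_numeral)
    obtain d d' where d: "d \<in> D" "dist d x < 1 / Suc n" and d': "d' \<in> D'" "dist d' y < 1 / Suc n"
      using D(2) D'(2) z by (meson of_nat_0_less_iff zero_less_Suc zero_less_divide_1_iff)
    have "R (d, d', n) \<subseteq> W"
    proof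
      fix w assume "w \<in> R (d, d', n)"
      then obtain x' y' where w: "w = (x', y')" "x' \<in> A" "y' \<in> B"
        and "dist d x' < 1 / Suc n" "dist d' y' < 1 / Suc n"
        by (auto simp: R_def)
      then have "dist x' x < r / 2" "dist y' y < r / 2"
        using d d' n dist_triangle3[of x' x d] dist_triangle3[of y' y d'] by linarith+
      then have "dist w z < r"
        using sqrt_sum_squares_le_sum[of "dist x' x" "dist y' y"] by (simp add: w z dist_Pair_Pair)
      then show "w \<in> W" using r w by auto
    qed
    moreover have "z \<in> R (d, d', n)" using z d d' by (simp add: R_def dist_commute)
    ultimately show "z \<in> \<Union>(R ` I)" using d d' by (auto simp: I_def)
  qed
  then have "W = \<Union>(R ` I)" by (auto simp: I_def)
  moreover have "countable I"
    by (rule countable_subset[of _ "D \<times> D' \<times> UNIV"]) (use D D' in \<open>auto simp: I_def\<close>)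
  moreover have "R i \<in> sets (restrict_space borel A \<Otimes>\<^sub>M restrict_space borel B)" for i
    by (auto simp: R_def sets_restrict_space split: prod.split)
  ultimately show ?thesis by (auto intro: sets.countable_UN'')
qed

lemma borel_measurable_continuous_on_pair_restrict_borel:
  fixes f :: "'a::metric_space \<times> 'b::metric_space \<Rightarrow> 'c::topological_space"
  assumes "compact A" "compact B" "continuous_on (A \<times> B) f"
  shows "f \<in> borel_measurable (restrict_space borel A \<Otimes>\<^sub>M restrict_space borel B)"
proof (rule borel_measurableI)
  fix S :: "'c set" assume "open S"
  then have "openin (top_of_set (A \<times> B)) (A \<times> B \<inter> f -` S)"
    by (rule continuous_openin_preimage_gen[OF assms(3)])
  then show "f -` S \<inter> space (restrict_space borel A \<Otimes>\<^sub>M restrict_space borel B)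
      \<in> sets (restrict_space borel A \<Otimes>\<^sub>M restrict_space borel B)"
    using openin_sets_pair_restrict_borel[OF assms(1,2)]
    by (simp add: space_pair_measure space_restrict_space Int_commute)
qed

section \<open>The c-transform and weak duality\<close>

definition kantorovich_dual ::
  "'a set \<Rightarrow> ('a \<times> 'b \<Rightarrow> real) \<Rightarrow> 'a measure \<Rightarrow> 'b measure \<Rightarrow> ('a \<Rightarrow> real) \<Rightarrow> real" where
  "kantorovich_dual \<Omega> c \<mu> \<nu> \<phi> = (\<integral>x. \<phi> x \<partial>\<mu>) - (\<integral>y. c_transform \<Omega> c \<phi> y \<partial>\<nu>)"

lemma kantorovich_potentials_iff:
  "\<phi> \<in> kantorovich_potentials \<Omega> c \<mu> \<nu> \<longleftrightarrow>
     continuous_on \<Omega> \<phi> \<and> kantorovich_dual \<Omega> c \<mu> \<nu> \<phi> = OT_cost c \<mu> \<nu>"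
  by (simp add: kantorovich_potentials_def kantorovich_dual_def)

lemma couplings_pair_measure:
  assumes "prob_space \<mu>" "prob_space \<nu>"
  shows "\<mu> \<Otimes>\<^sub>M \<nu> \<in> couplings \<mu> \<nu>"
  using prob_space.distr_pair_fst[OF assms(2)] distr_pair_snd[OF assms] by (simp add: couplings_def)

lemma prob_space_coupling:
  assumes "\<pi> \<in> couplings \<mu> \<nu>" "prob_space \<mu>"
  shows "prob_space \<pi>"
proof -
  have "fst \<in> measurable \<pi> \<mu>" "distr \<pi> \<mu> fst = \<mu>"
    using assms(1) measurable_cong_sets[of \<pi> "\<mu> \<Otimes>\<^sub>M \<nu>"] by (auto simp: couplings_def)
  then show ?thesis
    using prob_space_distrD[of fst \<pi> \<mu>] assms(2) by simp
qed

lemma coupling_marginal_integrals: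
  fixes f :: "'a \<Rightarrow> real" and g :: "'b \<Rightarrow> real"
  assumes "\<pi> \<in> couplings \<mu> \<nu>" "integrable \<mu> f" "integrable \<nu> g"
  shows "integrable \<pi> (\<lambda>z. f (fst z))" "(\<integral>z. f (fst z) \<partial>\<pi>) = (\<integral>x. f x \<partial>\<mu>)"
    and "integrable \<pi> (\<lambda>z. g (snd z))" "(\<integral>z. g (snd z) \<partial>\<pi>) = (\<integral>y. g y \<partial>\<nu>)"
proof -
  have fst: "fst \<in> measurable \<pi> \<mu>" "distr \<pi> \<mu> fst = \<mu>"
    and snd: "snd \<in> measurable \<pi> \<nu>" "distr \<pi> \<nu> snd = \<nu>"
    using assms(1) measurable_cong_sets[of \<pi> "\<mu> \<Otimes>\<^sub>M \<nu>"] by (auto simp: couplings_def)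
  have f: "f \<in> borel_measurable \<mu>" and g: "g \<in> borel_measurable \<nu>" using assms(2,3) by auto
  show "integrable \<pi> (\<lambda>z. f (fst z))" "(\<integral>z. f (fst z) \<partial>\<pi>) = (\<integral>x. f x \<partial>\<mu>)"
    and "integrable \<pi> (\<lambda>z. g (snd z))" "(\<integral>z. g (snd z) \<partial>\<pi>) = (\<integral>y. g y \<partial>\<nu>)"
    using integrable_distr_eq[OF fst(1) f] integral_distr[OF fst(1) f]
      integrable_distr_eq[OF snd(1) g] integral_distr[OF snd(1) g] fst(2) snd(2) assms(2,3)
    by simp_all
qed

locale compact_cost =
  fixes \<Omega> :: "'a::metric_space set" and \<Omega>' :: "'b::metric_space set" and c :: "'a \<times> 'b \<Rightarrow> real"
  assumes compact_\<Omega>: "compact \<Omega>" and compact_\<Omega>': "compact \<Omega>'"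
    and continuous_c: "continuous_on (\<Omega> \<times> \<Omega>') c"
    and \<Omega>_nonempty: "\<Omega> \<noteq> {}" \<comment> \<open>otherwise the c-transform is the junk value Sup {}\<close>
begin

lemma continuous_on_c_section: "y \<in> \<Omega>' \<Longrightarrow> continuous_on \<Omega> (\<lambda>x. c (x, y))"
  by (rule continuous_on_compose2[OF continuous_c]) (auto intro!: continuous_intros)

lemma c_transform_ge:
  assumes "continuous_on \<Omega> f" "y \<in> \<Omega>'" "x \<in> \<Omega>"
  shows "f x - c (x, y) \<le> c_transform \<Omega> c f y"
proof -
  have "continuous_on \<Omega> (\<lambda>x. f x - c (x, y))"
    using assms continuous_on_c_section by (intro continuous_intros)
  then have "bdd_above ((\<lambda>x. f x - c (x, y)) ` \<Omega>)"
    using compact_\<Omega> by (intro bounded_imp_bdd_above compact_imp_bounded compact_continuous_image)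
  then show ?thesis
    unfolding c_transform_def using assms(3) by (rule cSUP_upper2) simp
qed

lemma c_transform_le:
  assumes "\<And>x. x \<in> \<Omega> \<Longrightarrow> f x - c (x, y) \<le> t"
  shows "c_transform \<Omega> c f y \<le> t"
  unfolding c_transform_def using \<Omega>_nonempty assms by (rule cSUP_least)

lemma c_transform_mono:
  assumes "continuous_on \<Omega> g" "y \<in> \<Omega>'" "\<And>x. x \<in> \<Omega> \<Longrightarrow> f x \<le> g x"
  shows "c_transform \<Omega> c f y \<le> c_transform \<Omega> c g y"
proof (rule c_transform_le)
  fix x assume "x \<in> \<Omega>"
  then show "f x - c (x, y) \<le> c_transform \<Omega> c g y"
    using c_transform_ge[OF assms(1,2)] assms(3) by fastforce
qed

lemma c_transform_add_const:
  assumes "continuous_on \<Omega> f" "y \<in> \<Omega>'"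
  shows "c_transform \<Omega> c (\<lambda>x. f x + a) y = c_transform \<Omega> c f y + a"
proof (rule antisym)
  show "c_transform \<Omega> c (\<lambda>x. f x + a) y \<le> c_transform \<Omega> c f y + a"
    using c_transform_ge[OF assms] by (intro c_transform_le) fastforce
  have "continuous_on \<Omega> (\<lambda>x. f x + a)" using assms(1) by (intro continuous_intros)
  then have "c_transform \<Omega> c f y \<le> c_transform \<Omega> c (\<lambda>x. f x + a) y - a"
    using c_transform_ge assms(2) by (intro c_transform_le) fastforce
  then show "c_transform \<Omega> c f y + a \<le> c_transform \<Omega> c (\<lambda>x. f x + a) y" by simp
qed

lemma c_transform_min_add_max_le:
  assumes "continuous_on \<Omega> f" "continuous_on \<Omega> g" "y \<in> \<Omega>'"
  shows "c_transform \<Omega> c (\<lambda>x. min (f x) (g x)) y + c_transform \<Omega> c (\<lambda>x. max (f x) (g x)) y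
    \<le> c_transform \<Omega> c f y + c_transform \<Omega> c g y"
proof -
  have "c_transform \<Omega> c (\<lambda>x. min (f x) (g x)) y \<le> min (c_transform \<Omega> c f y) (c_transform \<Omega> c g y)"
    using c_transform_mono[OF assms(1,3)] c_transform_mono[OF assms(2,3)] by simp
  moreover have
    "c_transform \<Omega> c (\<lambda>x. max (f x) (g x)) y \<le> max (c_transform \<Omega> c f y) (c_transform \<Omega> c g y)"
    using c_transform_ge[OF assms(1,3)] c_transform_ge[OF assms(2,3)]
    by (intro c_transform_le) fastforce
  ultimately show ?thesis by linarith
qed

lemma c_transform_dist_le:
  assumes "continuous_on \<Omega> f" "y \<in> \<Omega>'" "y' \<in> \<Omega>'" "\<And>x. x \<in> \<Omega> \<Longrightarrow> \<bar>c (x, y') - c (x, y)\<bar> \<le> e"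
  shows "\<bar>c_transform \<Omega> c f y' - c_transform \<Omega> c f y\<bar> \<le> e"
proof -
  have "c_transform \<Omega> c f y' \<le> c_transform \<Omega> c f y + e"
    using c_transform_ge[OF assms(1,2)] assms(4) by (intro c_transform_le) fastforce
  moreover have "c_transform \<Omega> c f y \<le> c_transform \<Omega> c f y' + e"
    using c_transform_ge[OF assms(1,3)] assms(4) by (intro c_transform_le) fastforce
  ultimately show ?thesis by linarith
qed

lemma continuous_on_c_transform:
  assumes "continuous_on \<Omega> f"
  shows "continuous_on \<Omega>' (c_transform \<Omega> c f)"
  unfolding continuous_on_iff
proof (intro ballI allI impI)
  fix y and e :: real assume "y \<in> \<Omega>'" "0 < e"
  have "uniformly_continuous_on (\<Omega> \<times> \<Omega>') c"
    by (rule compact_uniformly_continuous[OF continuous_c compact_Times[OF compact_\<Omega> compact_\<Omega>']])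
  then obtain d where "d > 0" and d: "\<And>z z'. z \<in> \<Omega> \<times> \<Omega>' \<Longrightarrow> z' \<in> \<Omega> \<times> \<Omega>' \<Longrightarrow>
      dist z' z < d \<Longrightarrow> dist (c z') (c z) < e / 2"
    using \<open>0 < e\<close> unfolding uniformly_continuous_on_def by (metis half_gt_zero)
  have "dist (c_transform \<Omega> c f y') (c_transform \<Omega> c f y) < e" if "y' \<in> \<Omega>'" "dist y' y < d" for y'
  proof -
    have "\<bar>c (x, y') - c (x, y)\<bar> \<le> e / 2" if "x \<in> \<Omega>" for x
      using d[of "(x, y)" "(x, y')"] that \<open>y \<in> \<Omega>'\<close> \<open>y' \<in> \<Omega>'\<close> \<open>dist y' y < d\<close>
      by (simp add: dist_Pair_Pair dist_real_def)
    then have "\<bar>c_transform \<Omega> c f y' - c_transform \<Omega> c f y\<bar> \<le> e / 2"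
      by (rule c_transform_dist_le[OF assms \<open>y \<in> \<Omega>'\<close> \<open>y' \<in> \<Omega>'\<close>])
    then show ?thesis using \<open>0 < e\<close> by (simp add: dist_real_def)
  qed
  then show "\<exists>d>0. \<forall>y'\<in>\<Omega>'. dist y' y < d \<longrightarrow> dist (c_transform \<Omega> c f y') (c_transform \<Omega> c f y) < e"
    using \<open>d > 0\<close> by blast
qed

lemma kantorovich_dual_le_coupling_cost:
  assumes "prob_space \<mu>" "sets \<mu> = sets (restrict_space borel \<Omega>)"
    and "prob_space \<nu>" "sets \<nu> = sets (restrict_space borel \<Omega>')"
    and \<pi>: "\<pi> \<in> couplings \<mu> \<nu>" and f: "continuous_on \<Omega> f"
  shows "kantorovich_dual \<Omega> c \<mu> \<nu> f \<le> (\<integral>z. c z \<partial>\<pi>)"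
proof -
  let ?g = "c_transform \<Omega> c f"
  interpret \<pi>: prob_space \<pi> using prob_space_coupling[OF \<pi> assms(1)] .
  have sets_\<pi>: "sets \<pi> = sets (restrict_space borel \<Omega> \<Otimes>\<^sub>M restrict_space borel \<Omega>')"
    using \<pi> assms(2,4) by (simp add: couplings_def cong: sets_pair_measure_cong)
  have space_\<pi>: "space \<pi> = \<Omega> \<times> \<Omega>'"
    using sets_eq_imp_space_eq[OF sets_\<pi>] by (simp add: space_pair_measure space_restrict_space)
  have int_f: "integrable \<mu> f"
    using integrable_continuous_on_restrict_borel assms(1,2) compact_\<Omega> f prob_space.finite_measure
    by blast
  have int_g: "integrable \<nu> ?g"
    using integrable_continuous_on_restrict_borel assms(3,4) compact_\<Omega>' continuous_on_c_transform[OF f]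
      prob_space.finite_measure by blast
  note marginals = coupling_marginal_integrals[OF \<pi> int_f int_g]
  have int_c: "integrable \<pi> c"
    using borel_measurable_continuous_on_pair_restrict_borel[OF compact_\<Omega> compact_\<Omega>' continuous_c]
      measurable_cong_sets[OF sets_\<pi> refl] compact_Times[OF compact_\<Omega> compact_\<Omega>'] continuous_c
    by (intro integrable_continuous_on_compact_space) (auto simp: space_\<pi> \<pi>.finite_measure_axioms)
  have "kantorovich_dual \<Omega> c \<mu> \<nu> f = (\<integral>z. f (fst z) - ?g (snd z) \<partial>\<pi>)"
    using marginals by (simp add: kantorovich_dual_def)
  also have "\<dots> \<le> (\<integral>z. c z \<partial>\<pi>)"
  proof (rule integral_mono)
    fix z assume "z \<in> space \<pi>"
    then obtain x y where "z = (x, y)" "x \<in> \<Omega>" "y \<in> \<Omega>'" by (auto simp: space_\<pi>)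
    then show "f (fst z) - ?g (snd z) \<le> c z" using c_transform_ge[OF f \<open>y \<in> \<Omega>'\<close> \<open>x \<in> \<Omega>\<close>] by simp
  qed (use marginals int_c in simp_all)
  finally show ?thesis .
qed

lemma kantorovich_dual_le_OT_cost:
  assumes "prob_space \<mu>" "sets \<mu> = sets (restrict_space borel \<Omega>)"
    and "prob_space \<nu>" "sets \<nu> = sets (restrict_space borel \<Omega>')"
    and "continuous_on \<Omega> f"
  shows "kantorovich_dual \<Omega> c \<mu> \<nu> f \<le> OT_cost c \<mu> \<nu>"
  unfolding OT_cost_def
  using couplings_pair_measure[OF assms(1,3)]
    kantorovich_dual_le_coupling_cost[OF assms(1-4) _ assms(5)]
  by (intro cInf_greatest) auto

lemma kantorovich_dual_add_const:
  assumes "prob_space \<mu>" "sets \<mu> = sets (restrict_space borel \<Omega>)"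
    and "prob_space \<nu>" "sets \<nu> = sets (restrict_space borel \<Omega>')"
    and f: "continuous_on \<Omega> f"
  shows "kantorovich_dual \<Omega> c \<mu> \<nu> (\<lambda>x. f x + a) = kantorovich_dual \<Omega> c \<mu> \<nu> f"
proof -
  have "(\<integral>x. f x + a \<partial>\<mu>) = (\<integral>x. f x \<partial>\<mu>) + a"
    using assms(1,2) compact_\<Omega> f
    by (intro prob_space.integral_add_const integrable_continuous_on_restrict_borel
        prob_space.finite_measure)
  moreover have "(\<integral>y. c_transform \<Omega> c (\<lambda>x. f x + a) y \<partial>\<nu>) = (\<integral>y. c_transform \<Omega> c f y + a \<partial>\<nu>)"
    using c_transform_add_const[OF f] space_eq_restrict_borel[OF assms(4)]
    by (intro Bochner_Integration.integral_cong) auto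
  moreover have "\<dots> = (\<integral>y. c_transform \<Omega> c f y \<partial>\<nu>) + a"
    using assms(3,4) compact_\<Omega>' continuous_on_c_transform[OF f]
    by (intro prob_space.integral_add_const integrable_continuous_on_restrict_borel
        prob_space.finite_measure)
  ultimately show ?thesis by (simp add: kantorovich_dual_def)
qed

lemma kantorovich_potentials_add_const:
  assumes "prob_space \<mu>" "sets \<mu> = sets (restrict_space borel \<Omega>)"
    and "prob_space \<nu>" "sets \<nu> = sets (restrict_space borel \<Omega>')"
    and "\<phi> \<in> kantorovich_potentials \<Omega> c \<mu> \<nu>"
  shows "(\<lambda>x. \<phi> x + a) \<in> kantorovich_potentials \<Omega> c \<mu> \<nu>"
  using assms kantorovich_dual_add_const[OF assms(1-4)]
  by (auto simp: kantorovich_potentials_iff intro!: continuous_intros)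

end

section \<open>The support of the positive part of \<mu>1 - \<mu>2\<close>

lemma measure_le_of_jordan_pos_eq_0:
  assumes "finite_measure \<mu>1" "jordan_pos \<mu>1 \<mu>2 U = 0" "B \<in> sets \<mu>1" "B \<subseteq> U"
  shows "measure \<mu>1 B \<le> measure \<mu>2 B"
proof -
  let ?X = "{measure \<mu>1 B - measure \<mu>2 B | B. B \<in> sets \<mu>1 \<and> B \<subseteq> U}"
  have "bdd_above ?X"
  proof (rule bdd_aboveI)
    fix x assume "x \<in> ?X"
    then obtain A where "x = measure \<mu>1 A - measure \<mu>2 A" by blast
    then show "x \<le> measure \<mu>1 (space \<mu>1)"
      using finite_measure.bounded_measure[OF assms(1), of A] measure_nonneg[of \<mu>2 A] by linarith
  qed
  then have "measure \<mu>1 B - measure \<mu>2 B \<le> Sup ?X"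
    using assms(3,4) by (intro cSup_upper) auto
  then show ?thesis using assms(2) unfolding jordan_pos_def by simp
qed

lemma nn_integral_mono_on_restriction:
  fixes f :: "'a \<Rightarrow> ennreal"
  assumes "sets M = sets N" "P \<in> sets M" "f \<in> borel_measurable M"
    and "\<And>A. A \<in> sets M \<Longrightarrow> A \<subseteq> P \<Longrightarrow> emeasure M A \<le> emeasure N A"
    and "\<And>x. x \<in> space M \<Longrightarrow> x \<notin> P \<Longrightarrow> f x = 0"
  shows "(\<integral>\<^sup>+x. f x \<partial>M) \<le> (\<integral>\<^sup>+x. f x \<partial>N)"
proof -
  have restrict: "(\<integral>\<^sup>+x. f x \<partial>L) = (\<integral>\<^sup>+x. f x \<partial>density L (indicator P))" if "sets L = sets M" for L
  proof -
    have "(\<integral>\<^sup>+x. f x \<partial>density L (indicator P)) = (\<integral>\<^sup>+x. indicator P x * f x \<partial>L)"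
      using that assms(2,3) by (intro nn_integral_density) (auto cong: measurable_cong_sets)
    also have "\<dots> = (\<integral>\<^sup>+x. f x \<partial>L)"
      using assms(5) sets_eq_imp_space_eq[OF that]
      by (intro nn_integral_cong) (auto simp: indicator_def)
    finally show ?thesis ..
  qed
  have "emeasure (density M (indicator P)) A \<le> emeasure (density N (indicator P)) A" for A
  proof (cases "A \<in> sets M")
    case True
    then show ?thesis
      using assms(1,2) assms(4)[of "P \<inter> A"] by (simp add: emeasure_restricted)
  next
    case False
    then show ?thesis using assms(1) by (simp add: emeasure_notin_sets)
  qed
  then have "density M (indicator P) \<le> density N (indicator P)"
    using assms(1) sets_eq_imp_space_eq[OF assms(1)] by (simp add: le_measure_iff le_fun_def)
  then show ?thesis
    unfolding restrict[OF refl] restrict[OF assms(1)[symmetric]]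
    using assms(1) by (intro nn_integral_mono_measure) auto
qed

locale borel_prob_pair =
  fixes \<Omega> :: "'a::metric_space set" and \<mu>1 \<mu>2 :: "'a measure"
  assumes compact_\<Omega>: "compact \<Omega>"
    and prob_space_\<mu>1: "prob_space \<mu>1" and sets_\<mu>1: "sets \<mu>1 = sets (restrict_space borel \<Omega>)"
    and prob_space_\<mu>2: "prob_space \<mu>2" and sets_\<mu>2: "sets \<mu>2 = sets (restrict_space borel \<Omega>)"
begin

lemma space_\<mu>1: "space \<mu>1 = \<Omega>" and space_\<mu>2: "space \<mu>2 = \<Omega>"
  using space_eq_restrict_borel sets_\<mu>1 sets_\<mu>2 by blast+

lemma finite_measure_\<mu>1: "finite_measure \<mu>1" and finite_measure_\<mu>2: "finite_measure \<mu>2"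
  using prob_space_\<mu>1 prob_space_\<mu>2 prob_space.finite_measure by blast+

lemma Int_sets_\<mu>1: "A \<in> sets borel \<Longrightarrow> \<Omega> \<inter> A \<in> sets \<mu>1"
  by (auto simp: sets_\<mu>1 sets_restrict_space)

lemma measure_le_on_finite_null_cover:
  assumes "finite \<T>" "\<And>T. T \<in> \<T> \<Longrightarrow> open T \<and> jordan_pos \<mu>1 \<mu>2 (\<Omega> \<inter> T) = 0"
    and "B \<in> sets \<mu>1" "B \<subseteq> \<Union>\<T>"
  shows "measure \<mu>1 B \<le> measure \<mu>2 B"
  using assms
proof (induction \<T> arbitrary: B rule: finite_induct)
  case empty
  then show ?case by simp
next
  case (insert T \<T>)
  have "open T" and null: "jordan_pos \<mu>1 \<mu>2 (\<Omega> \<inter> T) = 0" using insert.prems(1) by auto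
  have "B \<subseteq> \<Omega>" using sets.sets_into_space[OF insert.prems(2)] space_\<mu>1 by simp
  have inside: "B \<inter> (\<Omega> \<inter> T) \<in> sets \<mu>1" and outside: "B - (\<Omega> \<inter> T) \<in> sets \<mu>1"
    using insert.prems(2) Int_sets_\<mu>1[OF borel_open[OF \<open>open T\<close>]] by auto
  have "measure \<mu>1 (B \<inter> (\<Omega> \<inter> T)) \<le> measure \<mu>2 (B \<inter> (\<Omega> \<inter> T))"
    using measure_le_of_jordan_pos_eq_0[OF finite_measure_\<mu>1 null inside] by blast
  moreover have "measure \<mu>1 (B - (\<Omega> \<inter> T)) \<le> measure \<mu>2 (B - (\<Omega> \<inter> T))"
    using insert.IH[OF _ outside] insert.prems(1,3) \<open>B \<subseteq> \<Omega>\<close> by blast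
  moreover have "measure \<mu> B = measure \<mu> (B \<inter> (\<Omega> \<inter> T)) + measure \<mu> (B - (\<Omega> \<inter> T))"
    if "finite_measure \<mu>" "sets \<mu> = sets \<mu>1" for \<mu>
    using finite_measure.finite_measure_Union[OF that(1), of "B \<inter> (\<Omega> \<inter> T)" "B - (\<Omega> \<inter> T)"]
      inside outside that(2) by (simp add: Int_Diff_Un Int_Diff_disjoint)
  ultimately show ?case
    using finite_measure_\<mu>1 finite_measure_\<mu>2 sets_\<mu>1 sets_\<mu>2 by fastforce
qed

lemma measure_le_on_compact_outside_supp:
  assumes "compact K" "K \<subseteq> \<Omega> - supp_jordan_pos \<Omega> \<mu>1 \<mu>2" "B \<in> sets \<mu>1" "B \<subseteq> K"
  shows "measure \<mu>1 B \<le> measure \<mu>2 B"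
proof -
  define \<T> where "\<T> = {T. open T \<and> jordan_pos \<mu>1 \<mu>2 (\<Omega> \<inter> T) = 0}"
  have "K \<subseteq> \<Union>\<T>"
  proof
    fix x assume "x \<in> K"
    then obtain U where U: "openin (top_of_set \<Omega>) U" "jordan_pos \<mu>1 \<mu>2 U = 0" "x \<in> U"
      using assms(2) unfolding supp_jordan_pos_def by blast
    then obtain T where "open T" "U = \<Omega> \<inter> T" by (auto simp: openin_open)
    then show "x \<in> \<Union>\<T>" using U by (auto simp: \<T>_def)
  qed
  then obtain \<F> where "\<F> \<subseteq> \<T>" "finite \<F>" "K \<subseteq> \<Union>\<F>"
    using compactE[OF assms(1)] by (metis (no_types, lifting) \<T>_def mem_Collect_eq)
  then show ?thesis
    using measure_le_on_finite_null_cover[of \<F> B] assms(3,4) by (auto simp: \<T>_def)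
qed

lemma measure_le_on_positive_set:
  fixes h :: "'a \<Rightarrow> real"
  assumes h: "continuous_on \<Omega> h" "\<And>x. x \<in> supp_jordan_pos \<Omega> \<mu>1 \<mu>2 \<Longrightarrow> h x \<le> 0"
    and B: "B \<in> sets \<mu>1" "B \<subseteq> {x\<in>\<Omega>. 0 < h x}"
  shows "measure \<mu>1 B \<le> measure \<mu>2 B"
proof -
  define K where "K n = {x\<in>\<Omega>. 1 / real (Suc n) \<le> h x}" for n
  have closed_K: "closed (K n)" for n
    unfolding K_def by (rule continuous_on_closed_Collect_le[OF continuous_on_const h(1)])
      (rule compact_imp_closed[OF compact_\<Omega>])
  have K_eq: "\<Omega> \<inter> K n = K n" for n
    by (auto simp: K_def)
  have compact_K: "compact (K n)" and sets_K: "K n \<in> sets \<mu>1" for n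
    using compact_Int_closed[OF compact_\<Omega> closed_K] Int_sets_\<mu>1[OF borel_closed[OF closed_K]]
    by (simp_all only: K_eq)
  have le: "measure \<mu>1 (B \<inter> K n) \<le> measure \<mu>2 (B \<inter> K n)" for n
  proof (rule measure_le_on_compact_outside_supp[OF compact_K])
    show "K n \<subseteq> \<Omega> - supp_jordan_pos \<Omega> \<mu>1 \<mu>2"
    proof
      fix x assume "x \<in> K n"
      then have "x \<in> \<Omega>" and "1 / real (Suc n) \<le> h x" unfolding K_def by simp_all
      then have "x \<in> \<Omega>" "0 < h x" by (auto intro: order.strict_trans2[rotated])
      then show "x \<in> \<Omega> - supp_jordan_pos \<Omega> \<mu>1 \<mu>2" using h(2) by force
    qed
  qed (use B sets_K in auto)
  have "1 / real (Suc (Suc n)) \<le> 1 / real (Suc n)" for n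
    by (simp add: frac_le)
  then have "incseq (\<lambda>n. B \<inter> K n)"
    unfolding K_def by (intro incseq_SucI) (auto intro: order_trans)
  moreover have "(\<Union>n. B \<inter> K n) = B"
  proof (intro subset_antisym subsetI)
    fix x assume "x \<in> B"
    then obtain n where "1 / real (Suc n) < h x" "x \<in> \<Omega>" using B(2) nat_approx_posE by blast
    then have "x \<in> K n" unfolding K_def by simp
    then show "x \<in> (\<Union>n. B \<inter> K n)" using \<open>x \<in> B\<close> by blast
  qed auto
  moreover have "range (\<lambda>n. B \<inter> K n) \<subseteq> sets \<mu>1" "range (\<lambda>n. B \<inter> K n) \<subseteq> sets \<mu>2"
    using B(1) sets_K sets_\<mu>1 sets_\<mu>2 by auto
  ultimately have "(\<lambda>n. measure \<mu>1 (B \<inter> K n)) \<longlonglongrightarrow> measure \<mu>1 B"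
    and "(\<lambda>n. measure \<mu>2 (B \<inter> K n)) \<longlonglongrightarrow> measure \<mu>2 B"
    using finite_measure.finite_Lim_measure_incseq[OF finite_measure_\<mu>1]
      finite_measure.finite_Lim_measure_incseq[OF finite_measure_\<mu>2] by metis+
  then show ?thesis using le by (intro LIMSEQ_le) auto
qed

lemma integral_le_if_vanishes_on_supp:
  fixes h :: "'a \<Rightarrow> real"
  assumes h: "continuous_on \<Omega> h" "\<And>x. x \<in> \<Omega> \<Longrightarrow> 0 \<le> h x"
    and "\<And>x. x \<in> supp_jordan_pos \<Omega> \<mu>1 \<mu>2 \<Longrightarrow> h x = 0"
  shows "(\<integral>x. h x \<partial>\<mu>1) \<le> (\<integral>x. h x \<partial>\<mu>2)"
proof -
  have meas: "h \<in> borel_measurable \<mu>1"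
    by (rule borel_measurable_continuous_on_restrict_borel[OF sets_\<mu>1 h(1)])
  define P where "P = {x\<in>\<Omega>. 0 < h x}"
  have P: "P \<in> sets \<mu>1"
    using meas unfolding P_def space_\<mu>1[symmetric] by measurable
  have "(\<integral>\<^sup>+x. ennreal (h x) \<partial>\<mu>1) \<le> (\<integral>\<^sup>+x. ennreal (h x) \<partial>\<mu>2)"
  proof (rule nn_integral_mono_on_restriction[OF _ P])
    fix A assume "A \<in> sets \<mu>1" "A \<subseteq> P"
    then have "measure \<mu>1 A \<le> measure \<mu>2 A"
      using measure_le_on_positive_set[OF h(1)] assms(3) by (auto simp: P_def)
    then show "emeasure \<mu>1 A \<le> emeasure \<mu>2 A"
      using \<open>A \<in> sets \<mu>1\<close> sets_\<mu>1 sets_\<mu>2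
      by (simp add: finite_measure.emeasure_eq_measure[OF finite_measure_\<mu>1]
          finite_measure.emeasure_eq_measure[OF finite_measure_\<mu>2])
  qed (use meas sets_\<mu>1 sets_\<mu>2 in \<open>auto simp: P_def space_\<mu>1 dest: h(2)\<close>)
  moreover have "integrable \<mu>1 h" "integrable \<mu>2 h"
    using integrable_continuous_on_restrict_borel compact_\<Omega> h(1)
      finite_measure_\<mu>1 finite_measure_\<mu>2 sets_\<mu>1 sets_\<mu>2 by blast+
  moreover have "AE x in \<mu>1. 0 \<le> h x" "AE x in \<mu>2. 0 \<le> h x"
    using h(2) by (auto simp: space_\<mu>1 space_\<mu>2)
  ultimately have "ennreal (\<integral>x. h x \<partial>\<mu>1) \<le> ennreal (\<integral>x. h x \<partial>\<mu>2)"
    by (simp add: nn_integral_eq_integral)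
  then show ?thesis
    using integral_nonneg_AE[OF \<open>AE x in \<mu>2. 0 \<le> h x\<close>] by simp
qed

lemma supp_jordan_pos_nonempty:
  assumes "\<mu>1 \<noteq> \<mu>2"
  shows "supp_jordan_pos \<Omega> \<mu>1 \<mu>2 \<noteq> {}"
proof
  assume empty: "supp_jordan_pos \<Omega> \<mu>1 \<mu>2 = {}"
  have le: "measure \<mu>1 B \<le> measure \<mu>2 B" if "B \<in> sets \<mu>1" for B
    using measure_le_on_compact_outside_supp[OF compact_\<Omega> _ that] sets.sets_into_space[OF that]
    by (simp add: empty space_\<mu>1)
  have "\<mu>1 = \<mu>2"
  proof (rule measure_eqI)
    show "sets \<mu>1 = sets \<mu>2" using sets_\<mu>1 sets_\<mu>2 by simp
    fix A assume A: "A \<in> sets \<mu>1"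
    then have "\<Omega> - A \<in> sets \<mu>1" using space_\<mu>1 sets.compl_sets by metis
    then have "measure \<mu>1 A = measure \<mu>2 A"
      using le[OF A] le[of "\<Omega> - A"] A sets_\<mu>1 sets_\<mu>2
        prob_space.prob_compl[OF prob_space_\<mu>1, of A] prob_space.prob_compl[OF prob_space_\<mu>2, of A]
      by (simp add: space_\<mu>1 space_\<mu>2)
    then show "emeasure \<mu>1 A = emeasure \<mu>2 A"
      by (simp add: finite_measure.emeasure_eq_measure[OF finite_measure_\<mu>1]
          finite_measure.emeasure_eq_measure[OF finite_measure_\<mu>2])
  qed
  with assms show False ..
qed

lemma integral_min_add_integral_max_ge:
  fixes f g :: "'a \<Rightarrow> real"
  assumes "continuous_on \<Omega> f" "continuous_on \<Omega> g"
    and "\<And>x. x \<in> supp_jordan_pos \<Omega> \<mu>1 \<mu>2 \<Longrightarrow> f x \<le> g x"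
  shows "(\<integral>x. f x \<partial>\<mu>1) + (\<integral>x. g x \<partial>\<mu>2)
    \<le> (\<integral>x. min (f x) (g x) \<partial>\<mu>1) + (\<integral>x. max (f x) (g x) \<partial>\<mu>2)"
proof -
  define h where "h x = max (f x - g x) 0" for x
  have "continuous_on \<Omega> h" unfolding h_def using assms(1,2) by (intro continuous_intros)
  have int: "integrable \<mu>1 \<phi>" "integrable \<mu>2 \<phi>" if "continuous_on \<Omega> \<phi>" for \<phi> :: "'a \<Rightarrow> real"
    using integrable_continuous_on_restrict_borel compact_\<Omega> that
      finite_measure_\<mu>1 finite_measure_\<mu>2 sets_\<mu>1 sets_\<mu>2 by blast+
  have "(\<integral>x. min (f x) (g x) \<partial>\<mu>1) = (\<integral>x. f x - h x \<partial>\<mu>1)"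
    by (rule Bochner_Integration.integral_cong) (auto simp: h_def)
  also have "\<dots> = (\<integral>x. f x \<partial>\<mu>1) - (\<integral>x. h x \<partial>\<mu>1)"
    using int assms(1) \<open>continuous_on \<Omega> h\<close> by simp
  finally have "(\<integral>x. min (f x) (g x) \<partial>\<mu>1) = (\<integral>x. f x \<partial>\<mu>1) - (\<integral>x. h x \<partial>\<mu>1)" .
  moreover have "(\<integral>x. max (f x) (g x) \<partial>\<mu>2) = (\<integral>x. g x + h x \<partial>\<mu>2)"
    by (rule Bochner_Integration.integral_cong) (auto simp: h_def)
  moreover have "\<dots> = (\<integral>x. g x \<partial>\<mu>2) + (\<integral>x. h x \<partial>\<mu>2)"
    using int assms(2) \<open>continuous_on \<Omega> h\<close> by simp
  moreover have "(\<integral>x. h x \<partial>\<mu>1) \<le> (\<integral>x. h x \<partial>\<mu>2)"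
    using \<open>continuous_on \<Omega> h\<close> assms(3) by (intro integral_le_if_vanishes_on_supp) (auto simp: h_def)
  ultimately show ?thesis by linarith
qed

end

section \<open>Lattice operations on Kantorovich potentials\<close>

lemma unique_up_to_const_add:
  assumes "unique_up_to_const \<Omega> c \<mu> \<nu> \<phi>"
  shows "unique_up_to_const \<Omega> c \<mu> \<nu> (\<lambda>x. \<phi> x + a)"
  unfolding unique_up_to_const_def
proof safe
  fix \<psi> assume "\<psi> \<in> kantorovich_potentials \<Omega> c \<mu> \<nu>"
  then obtain C where "\<forall>x\<in>\<Omega>. \<psi> x = \<phi> x + C" using assms unfolding unique_up_to_const_def by blast
  then have "\<forall>x\<in>\<Omega>. \<psi> x = \<phi> x + a + (C - a)" by simp
  then show "\<exists>C. \<forall>x\<in>\<Omega>. \<psi> x = \<phi> x + a + C" by blast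
next
  fix C
  have "(\<lambda>x. \<phi> x + (a + C)) \<in> kantorovich_potentials \<Omega> c \<mu> \<nu>"
    using assms unfolding unique_up_to_const_def by blast
  then show "(\<lambda>x. \<phi> x + a + C) \<in> kantorovich_potentials \<Omega> c \<mu> \<nu>" by (simp add: add.assoc)
qed

lemma unique_up_to_const_min_imp_le:
  assumes "unique_up_to_const \<Omega> c \<mu> \<nu> \<phi>" "(\<lambda>x. min (\<phi> x) (g x)) \<in> kantorovich_potentials \<Omega> c \<mu> \<nu>"
    and "x0 \<in> \<Omega>" "\<phi> x0 \<le> g x0" "x \<in> \<Omega>"
  shows "\<phi> x \<le> g x"
proof -
  obtain C where C: "\<forall>x\<in>\<Omega>. min (\<phi> x) (g x) = \<phi> x + C"
    using bspec[OF conjunct1[OF assms(1)[unfolded unique_up_to_const_def]] assms(2)] by auto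
  then have "C = 0" using bspec[OF C assms(3)] assms(4) by simp
  then show ?thesis using bspec[OF C assms(5)] by (metis add_0_right min.absorb_iff1)
qed

lemma unique_up_to_const_max_imp_le:
  assumes "unique_up_to_const \<Omega> c \<mu> \<nu> g" "(\<lambda>x. max (f x) (g x)) \<in> kantorovich_potentials \<Omega> c \<mu> \<nu>"
    and "x0 \<in> \<Omega>" "f x0 \<le> g x0" "x \<in> \<Omega>"
  shows "f x \<le> g x"
proof -
  obtain C where C: "\<forall>x\<in>\<Omega>. max (f x) (g x) = g x + C"
    using bspec[OF conjunct1[OF assms(1)[unfolded unique_up_to_const_def]] assms(2)] by auto
  then have "C = 0" using bspec[OF C assms(3)] assms(4) by simp
  then show ?thesis using bspec[OF C assms(5)] by (metis add_0_right max.absorb_iff2)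
qed

locale two_source_transport = compact_cost \<Omega> \<Omega>' c + borel_prob_pair \<Omega> \<mu>1 \<mu>2
  for \<Omega> :: "'a::metric_space set" and \<Omega>' :: "'b::metric_space set" and c \<mu>1 \<mu>2 +
  fixes \<nu> :: "'b measure"
  assumes prob_space_\<nu>: "prob_space \<nu>" and sets_\<nu>: "sets \<nu> = sets (restrict_space borel \<Omega>')"
begin

lemma kantorovich_dual_min_add_max_ge:
  assumes "continuous_on \<Omega> f" "continuous_on \<Omega> g"
    and "\<And>x. x \<in> supp_jordan_pos \<Omega> \<mu>1 \<mu>2 \<Longrightarrow> f x \<le> g x"
  shows "kantorovich_dual \<Omega> c \<mu>1 \<nu> f + kantorovich_dual \<Omega> c \<mu>2 \<nu> g
    \<le> kantorovich_dual \<Omega> c \<mu>1 \<nu> (\<lambda>x. min (f x) (g x))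
      + kantorovich_dual \<Omega> c \<mu>2 \<nu> (\<lambda>x. max (f x) (g x))"
proof -
  let ?ct = "c_transform \<Omega> c"
  let ?m = "\<lambda>x. min (f x) (g x)" and ?M = "\<lambda>x. max (f x) (g x)"
  have int: "integrable \<nu> (?ct \<phi>)" if "continuous_on \<Omega> \<phi>" for \<phi>
    using integrable_continuous_on_restrict_borel prob_space_\<nu> sets_\<nu> compact_\<Omega>'
      continuous_on_c_transform[OF that] prob_space.finite_measure by blast
  have cont: "continuous_on \<Omega> ?m" "continuous_on \<Omega> ?M"
    using assms(1,2) by (auto intro!: continuous_intros)
  have "(\<integral>y. ?ct ?m y \<partial>\<nu>) + (\<integral>y. ?ct ?M y \<partial>\<nu>) = (\<integral>y. ?ct ?m y + ?ct ?M y \<partial>\<nu>)"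
    using int[OF cont(1)] int[OF cont(2)] by simp
  also have "\<dots> \<le> (\<integral>y. ?ct f y + ?ct g y \<partial>\<nu>)"
    using int[OF cont(1)] int[OF cont(2)] int[OF assms(1)] int[OF assms(2)]
      c_transform_min_add_max_le[OF assms(1,2)]
    by (intro integral_mono) (auto simp: space_eq_restrict_borel[OF sets_\<nu>])
  also have "\<dots> = (\<integral>y. ?ct f y \<partial>\<nu>) + (\<integral>y. ?ct g y \<partial>\<nu>)"
    using int[OF assms(1)] int[OF assms(2)] by simp
  finally show ?thesis
    using integral_min_add_integral_max_ge[OF assms] unfolding kantorovich_dual_def by linarith
qed

lemma min_max_kantorovich_potentials:
  assumes \<phi>1: "\<phi>1 \<in> kantorovich_potentials \<Omega> c \<mu>1 \<nu>" and \<phi>2: "\<phi>2 \<in> kantorovich_potentials \<Omega> c \<mu>2 \<nu>"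
    and "\<And>x. x \<in> supp_jordan_pos \<Omega> \<mu>1 \<mu>2 \<Longrightarrow> \<phi>1 x \<le> \<phi>2 x"
  shows "(\<lambda>x. min (\<phi>1 x) (\<phi>2 x)) \<in> kantorovich_potentials \<Omega> c \<mu>1 \<nu>"
    and "(\<lambda>x. max (\<phi>1 x) (\<phi>2 x)) \<in> kantorovich_potentials \<Omega> c \<mu>2 \<nu>"
proof -
  have cont: "continuous_on \<Omega> \<phi>1" "continuous_on \<Omega> \<phi>2"
    and opt: "kantorovich_dual \<Omega> c \<mu>1 \<nu> \<phi>1 = OT_cost c \<mu>1 \<nu>"
      "kantorovich_dual \<Omega> c \<mu>2 \<nu> \<phi>2 = OT_cost c \<mu>2 \<nu>"
    using \<phi>1 \<phi>2 by (auto simp: kantorovich_potentials_iff)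
  have cont': "continuous_on \<Omega> (\<lambda>x. min (\<phi>1 x) (\<phi>2 x))" "continuous_on \<Omega> (\<lambda>x. max (\<phi>1 x) (\<phi>2 x))"
    using cont by (auto intro!: continuous_intros)
  have "kantorovich_dual \<Omega> c \<mu>1 \<nu> (\<lambda>x. min (\<phi>1 x) (\<phi>2 x)) \<le> OT_cost c \<mu>1 \<nu>"
    and "kantorovich_dual \<Omega> c \<mu>2 \<nu> (\<lambda>x. max (\<phi>1 x) (\<phi>2 x)) \<le> OT_cost c \<mu>2 \<nu>"
    using kantorovich_dual_le_OT_cost[OF prob_space_\<mu>1 sets_\<mu>1 prob_space_\<nu> sets_\<nu> cont'(1)]
      kantorovich_dual_le_OT_cost[OF prob_space_\<mu>2 sets_\<mu>2 prob_space_\<nu> sets_\<nu> cont'(2)] .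
  moreover note kantorovich_dual_min_add_max_ge[OF cont assms(3)]
  ultimately show "(\<lambda>x. min (\<phi>1 x) (\<phi>2 x)) \<in> kantorovich_potentials \<Omega> c \<mu>1 \<nu>"
    and "(\<lambda>x. max (\<phi>1 x) (\<phi>2 x)) \<in> kantorovich_potentials \<Omega> c \<mu>2 \<nu>"
    using opt cont' by (simp_all add: kantorovich_potentials_iff)
qed

lemma potential_le_of_le_on_supp:
  assumes "\<mu>1 \<noteq> \<mu>2"
    and "\<phi>1 \<in> kantorovich_potentials \<Omega> c \<mu>1 \<nu>" "\<phi>2 \<in> kantorovich_potentials \<Omega> c \<mu>2 \<nu>"
    and "unique_up_to_const \<Omega> c \<mu>1 \<nu> \<phi>1 \<or> unique_up_to_const \<Omega> c \<mu>2 \<nu> \<phi>2"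
    and le_on_supp: "\<And>x. x \<in> supp_jordan_pos \<Omega> \<mu>1 \<mu>2 \<Longrightarrow> \<phi>1 x \<le> \<phi>2 x"
    and "x \<in> \<Omega>"
  shows "\<phi>1 x \<le> \<phi>2 x"
proof -
  obtain x0 where x0: "x0 \<in> supp_jordan_pos \<Omega> \<mu>1 \<mu>2"
    using supp_jordan_pos_nonempty[OF assms(1)] by blast
  then have "x0 \<in> \<Omega>" by (simp add: supp_jordan_pos_def)
  note potentials = min_max_kantorovich_potentials[OF assms(2,3) le_on_supp]
  from assms(4) show ?thesis
  proof
    assume "unique_up_to_const \<Omega> c \<mu>1 \<nu> \<phi>1"
    from unique_up_to_const_min_imp_le[OF this potentials(1) \<open>x0 \<in> \<Omega>\<close> le_on_supp[OF x0] assms(6)]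
    show ?thesis .
  next
    assume "unique_up_to_const \<Omega> c \<mu>2 \<nu> \<phi>2"
    from unique_up_to_const_max_imp_le[OF this potentials(2) \<open>x0 \<in> \<Omega>\<close> le_on_supp[OF x0] assms(6)]
    show ?thesis .
  qed
qed

end

lemma cSUP_eq_cSUP_subset:
  fixes f :: "'a \<Rightarrow> 'b::conditionally_complete_lattice"
  assumes "S \<subseteq> T" "S \<noteq> {}" "bdd_above (f ` T)" "\<And>x. x \<in> T \<Longrightarrow> f x \<le> (SUP x\<in>S. f x)"
  shows "(SUP x\<in>T. f x) = (SUP x\<in>S. f x)"
  using assms by (intro antisym cSUP_least cSUP_subset_mono) auto

theorem corollary3p5:
  fixes \<Omega> :: "'a::metric_space set" and \<Omega>' :: "'b::metric_space set"
    and c :: "'a \<times> 'b \<Rightarrow> real"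
    and \<mu>1 \<mu>2 :: "'a measure" and \<nu> :: "'b measure"
    and \<phi>1 \<phi>2 :: "'a \<Rightarrow> real"
  assumes "compact \<Omega>" and "compact \<Omega>'"
    and "continuous_on (\<Omega> \<times> \<Omega>') c"
    and "prob_space \<mu>1" and "sets \<mu>1 = sets (restrict_space borel \<Omega>)"
    and "prob_space \<mu>2" and "sets \<mu>2 = sets (restrict_space borel \<Omega>)"
    and "prob_space \<nu>" and "sets \<nu> = sets (restrict_space borel \<Omega>')"
    and "\<mu>1 \<noteq> \<mu>2"
    and "\<phi>1 \<in> kantorovich_potentials \<Omega> c \<mu>1 \<nu>"
    and "\<phi>2 \<in> kantorovich_potentials \<Omega> c \<mu>2 \<nu>"
    and "unique_up_to_const \<Omega> c \<mu>1 \<nu> \<phi>1 \<or> unique_up_to_const \<Omega> c \<mu>2 \<nu> \<phi>2"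
  shows "Sup ((\<lambda>x. \<phi>1 x - \<phi>2 x) ` \<Omega>) =
         Sup ((\<lambda>x. \<phi>1 x - \<phi>2 x) ` supp_jordan_pos \<Omega> \<mu>1 \<mu>2)"
proof -
  have "\<Omega> \<noteq> {}" using prob_space.not_empty[OF assms(4)] space_eq_restrict_borel[OF assms(5)] by simp
  interpret two_source_transport \<Omega> \<Omega>' c \<mu>1 \<mu>2 \<nu>
    by (intro two_source_transport.intro compact_cost.intro borel_prob_pair.intro
        two_source_transport_axioms.intro) (simp_all add: assms \<open>\<Omega> \<noteq> {}\<close>)
  define S where "S = supp_jordan_pos \<Omega> \<mu>1 \<mu>2"
  define a where "a = (SUP x\<in>S. \<phi>1 x - \<phi>2 x)"
  have "S \<subseteq> \<Omega>" "S \<noteq> {}"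
    using supp_jordan_pos_nonempty[OF assms(10)] by (auto simp: S_def supp_jordan_pos_def)
  have bdd: "bdd_above ((\<lambda>x. \<phi>1 x - \<phi>2 x) ` \<Omega>)"
    using assms(11,12) compact_\<Omega> unfolding kantorovich_potentials_iff
    by (intro bounded_imp_bdd_above compact_imp_bounded compact_continuous_image continuous_intros) auto
  then have "\<phi>1 x \<le> \<phi>2 x + a" if "x \<in> S" for x
    using cSUP_upper[OF that bdd_above_mono[OF bdd image_mono[OF \<open>S \<subseteq> \<Omega>\<close>]]] by (simp add: a_def)
  moreover have "(\<lambda>x. \<phi>2 x + a) \<in> kantorovich_potentials \<Omega> c \<mu>2 \<nu>"
    using prob_space_\<mu>2 sets_\<mu>2 prob_space_\<nu> sets_\<nu> assms(12) by (rule kantorovich_potentials_add_const)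
  moreover have "unique_up_to_const \<Omega> c \<mu>1 \<nu> \<phi>1 \<or> unique_up_to_const \<Omega> c \<mu>2 \<nu> (\<lambda>x. \<phi>2 x + a)"
    using assms(13) unique_up_to_const_add by blast
  ultimately have "\<phi>1 x \<le> \<phi>2 x + a" if "x \<in> \<Omega>" for x
    using potential_le_of_le_on_supp[OF assms(10,11)] that unfolding S_def by blast
  then show ?thesis
    using \<open>S \<subseteq> \<Omega>\<close> \<open>S \<noteq> {}\<close> bdd unfolding S_def a_def
    by (intro cSUP_eq_cSUP_subset) (auto simp: algebra_simps)
qed

end
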